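(* Let $V$ be a finite nonempty set and $f:\{0,1\}^V\to\{0,1\}^V$ a Boolean network. If no subnetwork of $f$ (including $f$ itself) is even-self-dual or odd-self-dual, then the conjugate $\tilde f$ of $f$ is a bijection.
   Context: For $x,y\in\{0,1\}^V$, $x\oplus y$ is componentwise addition mod 2, $1$ denotes the all-ones point, and $\|x\|$ is the number of components of $x$ equal to $1$; $x$ is even (odd) if $\|x\|$ is even (odd). The conjugate of $f$ is $\tilde f(x)=f(x)\oplus x$. For a nonempty $I\subseteq V$ and $z\in\{0,1\}^{V\setminus I}$, the subnetwork of $f$ induced by $z$ is the network $h:\{0,1\}^I\to\{0,1\}^I$ defined by $h(x|_I)=f(x)|_I$ for all $x\in\{0,1\}^V$ whose restriction to $V\setminus I$ equals $z$ (for $I=V$ this gives $f$ itself, so $f$ is a subnetwork of itself). A network $g$ on a set $W$ is self-dual if $g(x\oplus 1)=g(x)\oplus 1$ for all $x$; it is even if $\tilde g(\{0,1\}^W)$ is exactly the set of even points of $\{0,1\}^W$, and odd if $\tilde g(\{0,1\}^W)$ is exactly the set of odd points. It is even-self-dual (odd-self-dual) if it is both even (odd) and self-dual. *)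

theory Defs
  imports Main
begin

text \<open>Points of {0,1}^W are represented as Boolean functions 'v \<Rightarrow> bool that are
  False outside W (True = 1). A network on W is a function mapping such points to such points.\<close>

definition points :: "'v set \<Rightarrow> ('v \<Rightarrow> bool) set" where
  "points W = {x. \<forall>v. v \<notin> W \<longrightarrow> x v = False}"

definition xorp :: "('v \<Rightarrow> bool) \<Rightarrow> ('v \<Rightarrow> bool) \<Rightarrow> ('v \<Rightarrow> bool)" where
  "xorp x y = (\<lambda>v. x v \<noteq> y v)"

definition ones :: "'v set \<Rightarrow> ('v \<Rightarrow> bool)" where
  "ones W = (\<lambda>v. v \<in> W)"

definition weight :: "'v set \<Rightarrow> ('v \<Rightarrow> bool) \<Rightarrow> nat" where
  "weight W x = card {v \<in> W. x v}"

definition conj_net :: "(('v \<Rightarrow> bool) \<Rightarrow> ('v \<Rightarrow> bool)) \<Rightarrow> ('v \<Rightarrow> bool) \<Rightarrow> ('v \<Rightarrow> bool)" where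
  "conj_net f x = xorp (f x) x"

definition restr :: "'v set \<Rightarrow> ('v \<Rightarrow> bool) \<Rightarrow> ('v \<Rightarrow> bool)" where
  "restr I x = (\<lambda>v. v \<in> I \<and> x v)"

definition glue :: "'v set \<Rightarrow> ('v \<Rightarrow> bool) \<Rightarrow> ('v \<Rightarrow> bool) \<Rightarrow> ('v \<Rightarrow> bool)" where
  "glue I y z = (\<lambda>v. if v \<in> I then y v else z v)"

text \<open>subnetwork of f induced by z \<in> {0,1}^(V - I): h(x|_I) = f(x)|_I\<close>
definition subnet :: "(('v \<Rightarrow> bool) \<Rightarrow> ('v \<Rightarrow> bool)) \<Rightarrow> 'v set \<Rightarrow> ('v \<Rightarrow> bool)
    \<Rightarrow> ('v \<Rightarrow> bool) \<Rightarrow> ('v \<Rightarrow> bool)" where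
  "subnet f I z = (\<lambda>y. restr I (f (glue I y z)))"

definition self_dual :: "'v set \<Rightarrow> (('v \<Rightarrow> bool) \<Rightarrow> ('v \<Rightarrow> bool)) \<Rightarrow> bool" where
  "self_dual W g \<longleftrightarrow> (\<forall>x \<in> points W. g (xorp x (ones W)) = xorp (g x) (ones W))"

definition even_net :: "'v set \<Rightarrow> (('v \<Rightarrow> bool) \<Rightarrow> ('v \<Rightarrow> bool)) \<Rightarrow> bool" where
  "even_net W g \<longleftrightarrow> conj_net g ` points W = {x \<in> points W. even (weight W x)}"

definition odd_net :: "'v set \<Rightarrow> (('v \<Rightarrow> bool) \<Rightarrow> ('v \<Rightarrow> bool)) \<Rightarrow> bool" where
  "odd_net W g \<longleftrightarrow> conj_net g ` points W = {x \<in> points W. odd (weight W x)}"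

definition even_self_dual :: "'v set \<Rightarrow> (('v \<Rightarrow> bool) \<Rightarrow> ('v \<Rightarrow> bool)) \<Rightarrow> bool" where
  "even_self_dual W g \<longleftrightarrow> even_net W g \<and> self_dual W g"

definition odd_self_dual :: "'v set \<Rightarrow> (('v \<Rightarrow> bool) \<Rightarrow> ('v \<Rightarrow> bool)) \<Rightarrow> bool" where
  "odd_self_dual W g \<longleftrightarrow> odd_net W g \<and> self_dual W g"

end

theory Submission
  imports Defs
begin

text \<open>By induction on I, the conjugate h of every subnetwork on I is injective. If the
  conjugates of the subnetworks on I - {i} are injective, then h is locally injective:
  x is determined by x i together with h x off i. For such an h, two distinct points
  with the same image are antipodal; a value with an antipodal pair of preimages stays
  such a value when two coordinates are flipped, and leaves the image when one is flipped.
  Hence, if h is not injective, its image is a full parity class and h (x \<oplus> 1) = h x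
  for all x, which says exactly that the subnetwork is even- or odd-self-dual.\<close>

lemma points_eq_image_Pow: "points I = (\<lambda>S v. v \<in> S) ` Pow I"
proof (rule set_eqI)
  fix x :: "'a \<Rightarrow> bool"
  show "x \<in> points I \<longleftrightarrow> x \<in> (\<lambda>S v. v \<in> S) ` Pow I"
  proof
    assume "x \<in> points I"
    then have "x = (\<lambda>v. v \<in> {v. x v})" "{v. x v} \<in> Pow I"
      by (auto simp: points_def)
    then show "x \<in> (\<lambda>S v. v \<in> S) ` Pow I" by blast
  qed (auto simp: points_def)
qed

lemma finite_points: "finite I \<Longrightarrow> finite (points I)"
  by (simp add: points_eq_image_Pow)

lemma xorp_ones_in_points: "x \<in> points I \<Longrightarrow> xorp x (ones I) \<in> points I"
  by (auto simp: points_def xorp_def ones_def)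

lemma xorp_ones_involution: "x \<in> points I \<Longrightarrow> xorp (xorp x (ones I)) (ones I) = x"
  by (auto simp: points_def xorp_def ones_def fun_eq_iff)

lemma even_weight_xorp:
  assumes "finite I"
  shows "even (weight I (xorp x y)) \<longleftrightarrow> (even (weight I x) \<longleftrightarrow> even (weight I y))"
proof -
  let ?X = "{v \<in> I. x v}" and ?Y = "{v \<in> I. y v}"
  have fin: "finite ?X" "finite ?Y" using assms by auto
  have diff: "{v \<in> I. xorp x y v} = (?X \<union> ?Y) - (?X \<inter> ?Y)"
    by (auto simp: xorp_def)
  have "card (?X \<union> ?Y - ?X \<inter> ?Y) = card (?X \<union> ?Y) - card (?X \<inter> ?Y)"
    by (rule card_Diff_subset) (use fin in auto)
  moreover have "card (?X \<inter> ?Y) \<le> card (?X \<union> ?Y)"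
    by (rule card_mono) (use fin in auto)
  ultimately have "weight I (xorp x y) + 2 * card (?X \<inter> ?Y) = weight I x + weight I y"
    unfolding weight_def diff using card_Un_Int[OF fin] by simp
  then have "even (weight I (xorp x y) + 2 * card (?X \<inter> ?Y)) \<longleftrightarrow> even (weight I x + weight I y)"
    by (rule arg_cong)
  then show ?thesis by simp
qed

lemma points_agree_off_coordinate:
  assumes "a \<in> points I" "b \<in> points I" "\<forall>v \<in> I - {i}. a v = b v"
  shows "a = b \<or> a = b(i := \<not> b i)"
proof (cases "a i = b i")
  case True
  then have "a v = b v" for v
    using assms by (cases "v \<in> I"; cases "v = i") (auto simp: points_def)
  then show ?thesis by blast
next
  case False
  then have "a v = (b(i := \<not> b i)) v" for v
    using assms by (cases "v \<in> I"; cases "v = i") (auto simp: points_def)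
  then show ?thesis by blast
qed

locale locally_injective_net =
  fixes I :: "'v set" and h :: "('v \<Rightarrow> bool) \<Rightarrow> ('v \<Rightarrow> bool)"
  assumes finite_I: "finite I"
    and h_points: "x \<in> points I \<Longrightarrow> h x \<in> points I"
    and locally_inj: "\<lbrakk>i \<in> I; x \<in> points I; y \<in> points I; x i = y i;
      \<forall>v \<in> I - {i}. h x v = h y v\<rbrakk> \<Longrightarrow> x = y"
begin

definition antipodal_value :: "('v \<Rightarrow> bool) \<Rightarrow> bool" where
  "antipodal_value w \<longleftrightarrow> (\<exists>x \<in> points I. h x = w \<and> h (xorp x (ones I)) = w)"

lemma antipodal_value_in_points: "antipodal_value w \<Longrightarrow> w \<in> points I"
  unfolding antipodal_value_def using h_points by auto

lemma collision_antipodal: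
  assumes x: "x \<in> points I" and y: "y \<in> points I" and "h x = h y" "x \<noteq> y"
  shows "y = xorp x (ones I)"
proof -
  have "x i \<noteq> y i" if "i \<in> I" for i
    using locally_inj[OF that x y] assms(3,4) by auto
  then show ?thesis
    using x y by (auto simp: points_def xorp_def ones_def fun_eq_iff)
qed

lemma flip_not_in_image:
  assumes w: "antipodal_value w" and i: "i \<in> I"
  shows "w(i := \<not> w i) \<notin> h ` points I"
proof
  assume "w(i := \<not> w i) \<in> h ` points I"
  then obtain u where u: "u \<in> points I" "h u = w(i := \<not> w i)" by auto
  obtain x where x: "x \<in> points I" "h x = w" "h (xorp x (ones I)) = w"
    using w unfolding antipodal_value_def by auto
  obtain x' where "x' \<in> points I" "h x' = w" "x' i = u i"
  proof (cases "x i = u i")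
    case False
    then have "xorp x (ones I) i = u i" using i by (auto simp: xorp_def ones_def)
    then show ?thesis using that xorp_ones_in_points[OF x(1)] x(3) by blast
  qed (use that x in blast)
  then have "x' = u" using locally_inj[OF i _ u(1)] u(2) by auto
  then show False using u(2) \<open>h x' = w\<close> by (metis fun_upd_same)
qed

lemma punctured_surj:
  assumes i: "i \<in> I" and t: "t \<in> points I"
  obtains u where "u \<in> points I" "u i = b" "\<forall>v \<in> I - {i}. h u v = t v"
proof -
  let ?\<phi> = "\<lambda>x. (h x)(i := x i)"
  have "inj_on ?\<phi> (points I)"
  proof (rule inj_onI)
    fix x y assume xy: "x \<in> points I" "y \<in> points I" and eq: "?\<phi> x = ?\<phi> y"
    have "x i = y i" using fun_cong[OF eq, of i] by simp
    moreover have "h x v = h y v" if "v \<in> I - {i}" for v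
      using fun_cong[OF eq, of v] that by auto
    ultimately show "x = y" using locally_inj[OF i xy] by blast
  qed
  moreover have "?\<phi> ` points I \<subseteq> points I"
    using h_points i by (auto simp: points_def split: if_splits)
  ultimately have "?\<phi> ` points I = points I"
    using endo_inj_surj finite_points[OF finite_I] by blast
  moreover have "t(i := b) \<in> points I" using t i by (auto simp: points_def)
  ultimately have "t(i := b) \<in> ?\<phi> ` points I" by simp
  then obtain u where u: "u \<in> points I" and eq: "?\<phi> u = t(i := b)"
    by (auto simp del: fun_upd_apply)
  show thesis
  proof (rule that[OF u])
    show "u i = b" using fun_cong[OF eq, of i] by simp
    show "\<forall>v \<in> I - {i}. h u v = t v"
    proof
      fix v assume "v \<in> I - {i}"
      then show "h u v = t v" using fun_cong[OF eq, of v] by auto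
    qed
  qed
qed

lemma flip2_antipodal_value:
  assumes w: "antipodal_value w" and ij: "i \<in> I" "j \<in> I" "i \<noteq> j"
  shows "antipodal_value (w(i := \<not> w i, j := \<not> w j))"
proof -
  let ?t = "w(i := \<not> w i, j := \<not> w j)"
  have wp: "w \<in> points I" using antipodal_value_in_points[OF w] .
  have preimage: "\<exists>u \<in> points I. u i = b \<and> h u = ?t" for b
  proof -
    have "?t \<in> points I" using wp ij by (auto simp: points_def)
    then obtain u where u: "u \<in> points I" "u i = b" "\<forall>v \<in> I - {i}. h u v = ?t v"
      using punctured_surj[OF ij(1)] by blast
    \<comment> \<open>Otherwise h u would be w flipped at j alone.\<close>
    have "h u \<noteq> w(j := \<not> w j)"
      using flip_not_in_image[OF w ij(2)] u(1) by (metis image_eqI)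
    moreover have "?t(i := \<not> ?t i) = w(j := \<not> w j)"
      using ij(3) by (auto simp: fun_eq_iff)
    ultimately have "h u = ?t"
      using points_agree_off_coordinate[OF h_points[OF u(1)] \<open>?t \<in> points I\<close> u(3)] by metis
    then show ?thesis using u by blast
  qed
  obtain u0 u1 where u: "u0 \<in> points I" "u0 i = False" "h u0 = ?t"
      "u1 \<in> points I" "u1 i = True" "h u1 = ?t"
    using preimage[of False] preimage[of True] by blast
  then have "u1 = xorp u0 (ones I)"
    using collision_antipodal[OF u(1) u(4)] by auto
  then show ?thesis unfolding antipodal_value_def using u by blast
qed

lemma antipodal_value_at_even_distance:
  assumes w: "antipodal_value w"
  shows "\<lbrakk>v \<in> points I; even (weight I (xorp v w))\<rbrakk> \<Longrightarrow> antipodal_value v"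
proof (induction "weight I (xorp v w)" arbitrary: v rule: less_induct)
  case less
  let ?D = "{k \<in> I. xorp v w k}"
  have finD: "finite ?D" using finite_I by simp
  show ?case
  proof (cases "?D = {}")
    case True
    then have "v = w"
      using less.prems(1) antipodal_value_in_points[OF w]
      by (auto simp: points_def xorp_def fun_eq_iff)
    then show ?thesis using w by simp
  next
    case False
    then obtain i where i: "i \<in> ?D" by blast
    have "?D \<noteq> {i}" using less.prems(2) by (auto simp: weight_def)
    then obtain j where j: "j \<in> ?D" "j \<noteq> i" using i by blast
    let ?v = "v(i := \<not> v i, j := \<not> v j)"
    have "{k \<in> I. xorp ?v w k} = ?D - {i, j}" using i j by (auto simp: xorp_def)
    moreover have "card (?D - {i, j}) = card ?D - 2"
      using finD i j by (simp add: card_Diff_subset)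
    moreover have "2 \<le> card ?D"
      using card_mono[OF finD, of "{i, j}"] i j by simp
    ultimately have "weight I (xorp ?v w) + 2 = weight I (xorp v w)"
      by (simp add: weight_def)
    then have "weight I (xorp ?v w) < weight I (xorp v w)" "even (weight I (xorp ?v w))"
      using less.prems(2) by (linarith, metis dvd_add_triv_right_iff)
    moreover have "?v \<in> points I" using less.prems(1) i j by (auto simp: points_def)
    ultimately have "antipodal_value ?v" using less.hyps by blast
    with i j have "antipodal_value (?v(i := \<not> ?v i, j := \<not> ?v j))"
      using flip2_antipodal_value by blast
    also have "?v(i := \<not> ?v i, j := \<not> ?v j) = v" using j(2) by (auto simp: fun_eq_iff)
    finally show ?thesis .
  qed
qed

lemma not_in_image_at_odd_distance:
  assumes w: "antipodal_value w" and v: "v \<in> points I" and odd: "odd (weight I (xorp v w))"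
  shows "v \<notin> h ` points I"
proof -
  let ?D = "{k \<in> I. xorp v w k}"
  have "?D \<noteq> {}" using odd unfolding weight_def by (metis card.empty even_zero)
  then obtain i where i: "i \<in> ?D" by blast
  let ?v = "v(i := \<not> v i)"
  have "{k \<in> I. xorp ?v w k} = ?D - {i}" using i by (auto simp: xorp_def)
  then have "weight I (xorp ?v w) + 1 = weight I (xorp v w)"
    using card.remove[of ?D i] i finite_I by (simp add: weight_def)
  then have "even (weight I (xorp ?v w))" using odd by (metis Suc_eq_plus1 even_Suc)
  moreover have "?v \<in> points I" using v i by (auto simp: points_def)
  ultimately have "antipodal_value ?v" using antipodal_value_at_even_distance[OF w] by blast
  then have "?v(i := \<not> ?v i) \<notin> h ` points I" using flip_not_in_image i by blast
  then show ?thesis by simp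
qed

lemma image_eq_even_distance:
  assumes w: "antipodal_value w"
  shows "h ` points I = {v \<in> points I. even (weight I (xorp v w))}"
proof
  show "h ` points I \<subseteq> {v \<in> points I. even (weight I (xorp v w))}"
    using not_in_image_at_odd_distance[OF w] h_points by blast
  show "{v \<in> points I. even (weight I (xorp v w))} \<subseteq> h ` points I"
    using antipodal_value_at_even_distance[OF w] unfolding antipodal_value_def by blast
qed

lemma antipodal_value_if_not_inj:
  assumes "\<not> inj_on h (points I)"
  obtains w where "antipodal_value w"
proof -
  obtain x y where "x \<in> points I" "y \<in> points I" "h x = h y" "x \<noteq> y"
    using assms unfolding inj_on_def by blast
  then have "antipodal_value (h x)"
    using collision_antipodal unfolding antipodal_value_def by metis
  then show thesis using that by blast
qed

lemma antipodal_invariant_if_not_inj: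
  assumes "\<not> inj_on h (points I)" and x: "x \<in> points I"
  shows "h (xorp x (ones I)) = h x"
proof -
  obtain w where w: "antipodal_value w" using antipodal_value_if_not_inj[OF assms(1)] .
  have "h x \<in> h ` points I" using x by blast
  then have "antipodal_value (h x)"
    using antipodal_value_at_even_distance[OF w] image_eq_even_distance[OF w] by blast
  then obtain u where u: "u \<in> points I" "h u = h x" "h (xorp u (ones I)) = h x"
    unfolding antipodal_value_def by blast
  show ?thesis
  proof (cases "x = u")
    case False
    then have "xorp x (ones I) = u"
      using collision_antipodal[OF u(1) x] u(2) xorp_ones_involution[OF u(1)] by metis
    then show ?thesis using u(2) by simp
  qed (use u in simp)
qed

lemma image_parity_class_if_not_inj:
  assumes "\<not> inj_on h (points I)"
  shows "h ` points I = {v \<in> points I. even (weight I v)}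
    \<or> h ` points I = {v \<in> points I. odd (weight I v)}"
proof -
  obtain w where w: "antipodal_value w" using antipodal_value_if_not_inj[OF assms] .
  show ?thesis
    unfolding image_eq_even_distance[OF w] even_weight_xorp[OF finite_I]
    by (cases "even (weight I w)") simp_all
qed

end

lemma self_dual_iff_conj_net_antipodal_invariant:
  "self_dual W g \<longleftrightarrow> (\<forall>x \<in> points W. conj_net g (xorp x (ones W)) = conj_net g x)"
  unfolding self_dual_def conj_net_def xorp_def ones_def fun_eq_iff by blast

lemma even_or_odd_self_dual_if_not_inj:
  assumes "locally_injective_net W (conj_net g)" and "\<not> inj_on (conj_net g) (points W)"
  shows "even_self_dual W g \<or> odd_self_dual W g"
proof -
  interpret locally_injective_net W "conj_net g" by fact
  have "self_dual W g"
    using antipodal_invariant_if_not_inj[OF assms(2)]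
    by (simp add: self_dual_iff_conj_net_antipodal_invariant)
  then show ?thesis
    using image_parity_class_if_not_inj[OF assms(2)]
    unfolding even_self_dual_def odd_self_dual_def even_net_def odd_net_def by blast
qed

lemma conj_subnet_in_points: "x \<in> points I \<Longrightarrow> conj_net (subnet f I z) x \<in> points I"
  by (auto simp: points_def conj_net_def subnet_def restr_def xorp_def)

lemma conj_subnet_delete_coordinate:
  assumes "i \<in> I" "u i = b"
  shows "conj_net (subnet f (I - {i}) (z(i := b))) (restr (I - {i}) u)
    = restr (I - {i}) (conj_net (subnet f I z) u)"
proof -
  have glue: "glue (I - {i}) (restr (I - {i}) u) (z(i := b)) = glue I u z"
    using assms by (auto simp: glue_def restr_def fun_eq_iff)
  show ?thesis
    unfolding conj_net_def subnet_def glue by (auto simp: restr_def xorp_def fun_eq_iff)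
qed

lemma locally_injective_conj_subnet:
  assumes "finite I"
    and inj: "\<And>i b. i \<in> I \<Longrightarrow>
      inj_on (conj_net (subnet f (I - {i}) (z(i := b)))) (points (I - {i}))"
  shows "locally_injective_net I (conj_net (subnet f I z))"
proof unfold_locales
  let ?h = "conj_net (subnet f I z)"
  show "finite I" by fact
  show "?h x \<in> points I" if "x \<in> points I" for x
    using that by (rule conj_subnet_in_points)
  fix i x y
  assume i: "i \<in> I" and xy: "x \<in> points I" "y \<in> points I" "x i = y i"
    and agree: "\<forall>v \<in> I - {i}. ?h x v = ?h y v"
  let ?h' = "conj_net (subnet f (I - {i}) (z(i := x i)))"
  have "restr (I - {i}) (?h x) = restr (I - {i}) (?h y)"
    using agree by (auto simp: restr_def fun_eq_iff)
  then have "?h' (restr (I - {i}) x) = ?h' (restr (I - {i}) y)"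
    using conj_subnet_delete_coordinate[OF i, where u = x and b = "x i"]
      conj_subnet_delete_coordinate[OF i, where u = y and b = "x i"] xy(3) by simp
  moreover have "restr (I - {i}) x \<in> points (I - {i})" "restr (I - {i}) y \<in> points (I - {i})"
    by (auto simp: restr_def points_def)
  ultimately have eq: "restr (I - {i}) x = restr (I - {i}) y"
    using inj[OF i] by (metis inj_onD)
  have "x v = y v" for v
    using fun_cong[OF eq, of v] xy
    by (cases "v \<in> I"; cases "v = i") (auto simp: restr_def points_def)
  then show "x = y" by blast
qed

lemma inj_on_conj_subnet:
  assumes "finite V"
    and no_self_dual: "\<And>I z. I \<noteq> {} \<Longrightarrow> I \<subseteq> V \<Longrightarrow> z \<in> points (V - I) \<Longrightarrow>
      \<not> even_self_dual I (subnet f I z) \<and> \<not> odd_self_dual I (subnet f I z)"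
    and "I \<subseteq> V" "z \<in> points (V - I)"
  shows "inj_on (conj_net (subnet f I z)) (points I)"
proof -
  have "finite I" using assms(1,3) by (rule finite_subset[rotated])
  then show ?thesis using assms(3,4)
  proof (induction I arbitrary: z rule: finite_psubset_induct)
    case (psubset I)
    show ?case
    proof (cases "I = {}")
      case True
      then show ?thesis by (auto simp: inj_on_def points_def fun_eq_iff)
    next
      case False
      have "locally_injective_net I (conj_net (subnet f I z))"
      proof (rule locally_injective_conj_subnet[OF psubset.hyps(1)])
        fix i b assume "i \<in> I"
        moreover from this have "z(i := b) \<in> points (V - (I - {i}))"
          using psubset.prems by (auto simp: points_def)
        ultimately show "inj_on (conj_net (subnet f (I - {i}) (z(i := b)))) (points (I - {i}))"
          using psubset.IH psubset.prems(1) by blast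
      qed
      then show ?thesis
        using even_or_odd_self_dual_if_not_inj no_self_dual[OF False psubset.prems] by blast
    qed
  qed
qed

lemma subnet_whole:
  assumes "x \<in> points V" "f x \<in> points V"
  shows "subnet f V (\<lambda>_. False) x = f x"
proof -
  have "glue V x (\<lambda>_. False) = x" using assms(1) by (auto simp: glue_def points_def)
  then show ?thesis using assms(2) by (auto simp: subnet_def restr_def points_def)
qed

theorem theorem8:
  fixes V :: "'v set" and f :: "('v \<Rightarrow> bool) \<Rightarrow> ('v \<Rightarrow> bool)"
  assumes "finite V" and "V \<noteq> {}"
    and "\<And>x. x \<in> points V \<Longrightarrow> f x \<in> points V"
    and "\<And>I z. I \<noteq> {} \<Longrightarrow> I \<subseteq> V \<Longrightarrow> z \<in> points (V - I) \<Longrightarrow>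
           \<not> even_self_dual I (subnet f I z) \<and> \<not> odd_self_dual I (subnet f I z)"
  shows "bij_betw (conj_net f) (points V) (points V)"
proof -
  have "inj_on (conj_net (subnet f V (\<lambda>_. False))) (points V)"
    by (rule inj_on_conj_subnet[OF assms(1,4)]) (auto simp: points_def)
  moreover have "conj_net (subnet f V (\<lambda>_. False)) x = conj_net f x" if "x \<in> points V" for x
    using subnet_whole[of x V f] that assms(3)[OF that] by (simp add: conj_net_def)
  ultimately have inj: "inj_on (conj_net f) (points V)"
    using inj_on_cong by blast
  moreover have "conj_net f ` points V \<subseteq> points V"
    using assms(3) by (auto simp: points_def conj_net_def xorp_def)
  ultimately have "conj_net f ` points V = points V"
    using endo_inj_surj finite_points[OF assms(1)] by blast
  with inj show ?thesis by (simp add: bij_betw_def)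
qed

end
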